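(* Let $G=(V,E)$ be a claw-free graph and $I$ a maximum cardinality independent set of $G$. Assume there exist a minimum independent dominating set $D$ of $G$ and a pack $X$ with $|D\cap X|>1$. Then there exists a minimum independent dominating set $D'$ of $G$ with $D'\cap I\neq\emptyset$.
   Context: Graphs are finite, simple, undirected; claw-free means no induced $K_{1,3}$. An independent dominating set is an independent set $S$ such that every vertex outside $S$ has a neighbour in $S$; a minimum independent dominating set is one of minimum cardinality. For $a\ne b$ in $I$ let $V_{a,b}=\{v\in V\setminus I: N(v)\cap I=\{a,b\}\}$, and for $a\in I$ let $V_a=\{v\in V\setminus I : N(v)\cap I=\{a\}\}$; these sets are called packs. *)

theory Defs
  imports Main
begin

definition graph :: "'a set \<Rightarrow> ('a \<Rightarrow> 'a \<Rightarrow> bool) \<Rightarrow> bool" where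
  "graph V E \<longleftrightarrow> finite V \<and> (\<forall>u v. E u v \<longrightarrow> u \<in> V \<and> v \<in> V)
     \<and> (\<forall>u v. E u v \<longrightarrow> E v u) \<and> (\<forall>v. \<not> E v v)"

definition nbhd :: "('a \<Rightarrow> 'a \<Rightarrow> bool) \<Rightarrow> 'a \<Rightarrow> 'a set" where
  "nbhd E v = {u. E v u}"

definition claw_free :: "'a set \<Rightarrow> ('a \<Rightarrow> 'a \<Rightarrow> bool) \<Rightarrow> bool" where
  "claw_free V E \<longleftrightarrow> \<not> (\<exists>c\<in>V. \<exists>x\<in>V. \<exists>y\<in>V. \<exists>z\<in>V.
      E c x \<and> E c y \<and> E c z \<and> x \<noteq> y \<and> x \<noteq> z \<and> y \<noteq> z
      \<and> \<not> E x y \<and> \<not> E x z \<and> \<not> E y z)"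

definition independent :: "'a set \<Rightarrow> ('a \<Rightarrow> 'a \<Rightarrow> bool) \<Rightarrow> 'a set \<Rightarrow> bool" where
  "independent V E S \<longleftrightarrow> S \<subseteq> V \<and> (\<forall>u\<in>S. \<forall>v\<in>S. \<not> E u v)"

definition max_independent :: "'a set \<Rightarrow> ('a \<Rightarrow> 'a \<Rightarrow> bool) \<Rightarrow> 'a set \<Rightarrow> bool" where
  "max_independent V E S \<longleftrightarrow> independent V E S \<and>
     (\<forall>T. independent V E T \<longrightarrow> card T \<le> card S)"

definition indep_dominating :: "'a set \<Rightarrow> ('a \<Rightarrow> 'a \<Rightarrow> bool) \<Rightarrow> 'a set \<Rightarrow> bool" where
  "indep_dominating V E S \<longleftrightarrow> independent V E S \<and>
     (\<forall>v\<in>V - S. \<exists>u\<in>S. E v u)"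

definition min_indep_dominating :: "'a set \<Rightarrow> ('a \<Rightarrow> 'a \<Rightarrow> bool) \<Rightarrow> 'a set \<Rightarrow> bool" where
  "min_indep_dominating V E S \<longleftrightarrow> indep_dominating V E S \<and>
     (\<forall>T. indep_dominating V E T \<longrightarrow> card S \<le> card T)"

definition pack2 :: "'a set \<Rightarrow> ('a \<Rightarrow> 'a \<Rightarrow> bool) \<Rightarrow> 'a set \<Rightarrow> 'a \<Rightarrow> 'a \<Rightarrow> 'a set" where
  "pack2 V E I a b = {v \<in> V - I. nbhd E v \<inter> I = {a, b}}"

definition pack1 :: "'a set \<Rightarrow> ('a \<Rightarrow> 'a \<Rightarrow> bool) \<Rightarrow> 'a set \<Rightarrow> 'a \<Rightarrow> 'a set" where
  "pack1 V E I a = {v \<in> V - I. nbhd E v \<inter> I = {a}}"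

definition is_pack :: "'a set \<Rightarrow> ('a \<Rightarrow> 'a \<Rightarrow> bool) \<Rightarrow> 'a set \<Rightarrow> 'a set \<Rightarrow> bool" where
  "is_pack V E I X \<longleftrightarrow>
     (\<exists>a\<in>I. \<exists>b\<in>I. a \<noteq> b \<and> X = pack2 V E I a b) \<or> (\<exists>a\<in>I. X = pack1 V E I a)"

end

theory Submission
  imports Defs
begin

text \<open>Two vertices x, y of D in a common pack are non-adjacent. If the pack is V_a, then
  (I - {a}) \<union> {x, y} would be an independent set larger than I; so the pack is V_{a,b}.
  Claw-freeness at a and at b shows that x and y are the only vertices of D adjacent to a or b,
  and claw-freeness at x and at y shows that every vertex dominated only by x or y is adjacent
  to a or b. Hence (D - {x, y}) \<union> {a, b} is an independent dominating set of size at most |D|,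
  and it meets I.\<close>

lemma claw_free_at_most_two_indep_nbrs:
  assumes "graph V E" "claw_free V E" "independent V E S"
    and "x \<in> S" "y \<in> S" "z \<in> S" "x \<noteq> y"
    and "E c x" "E c y" "E c z"
  shows "z = x \<or> z = y"
  using assms unfolding graph_def claw_free_def independent_def by blast

lemma pack1_clique:
  assumes "graph V E" "max_independent V E I"
    and "x \<in> pack1 V E I a" "y \<in> pack1 V E I a" "x \<noteq> y"
  shows "E x y"
proof (rule ccontr)
  assume "\<not> E x y"
  have I: "independent V E I" and fin: "finite I"
    using assms(1,2) finite_subset
    unfolding graph_def max_independent_def independent_def by auto
  have x: "x \<in> V - I" "\<And>c. c \<in> I \<Longrightarrow> E x c \<Longrightarrow> c = a" and a: "a \<in> I"
    and y: "y \<in> V - I" "\<And>c. c \<in> I \<Longrightarrow> E y c \<Longrightarrow> c = a"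
    using assms(3,4) unfolding pack1_def nbhd_def by auto
  let ?T = "insert x (insert y (I - {a}))"
  have "independent V E ?T"
    using I x y \<open>\<not> E x y\<close> assms(1) unfolding independent_def graph_def by blast
  then have "card ?T \<le> card I"
    using assms(2) unfolding max_independent_def by blast
  moreover have "card ?T = Suc (card I)"
    using fin a x(1) y(1) \<open>x \<noteq> y\<close> card_Suc_Diff1[OF fin a] by simp
  ultimately show False by simp
qed

lemma swap_independent:
  assumes "graph V E" "claw_free V E" "independent V E D"
    and "x \<in> D" "y \<in> D" "x \<noteq> y"
    and "E x a" "E x b" "E y a" "E y b" "\<not> E a b"
  shows "independent V E (insert a (insert b (D - {x, y})))"
  unfolding independent_def
proof (intro conjI ballI)
  have sym: "\<And>u v. E u v \<Longrightarrow> E v u" and irr: "\<And>v. \<not> E v v"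
    using assms(1) unfolding graph_def by auto
  have D_nbr: "z = x \<or> z = y" if "c \<in> {a, b}" "z \<in> D" "E c z" for c z
    using claw_free_at_most_two_indep_nbrs[OF assms(1-5) that(2) assms(6)] that assms(7-10) sym
    by blast
  show "insert a (insert b (D - {x, y})) \<subseteq> V"
    using assms(1,3,7,8) unfolding graph_def independent_def by blast
  fix u v assume "u \<in> insert a (insert b (D - {x, y}))" "v \<in> insert a (insert b (D - {x, y}))"
  then consider "u \<in> {a, b}" "v \<in> {a, b}" | "u \<in> {a, b}" "v \<in> D - {x, y}"
    | "u \<in> D - {x, y}" "v \<in> {a, b}" | "u \<in> D" "v \<in> D" by blast
  then show "\<not> E u v"
  proof cases
    case 1 then show ?thesis using assms(11) sym irr by blast
  next
    case 2 then show ?thesis using D_nbr by blast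
  next
    case 3 then show ?thesis using D_nbr sym by blast
  next
    case 4 then show ?thesis using assms(3) unfolding independent_def by blast
  qed
qed

lemma swap_dominating:
  assumes "graph V E" "claw_free V E" "\<forall>v \<in> V - D. \<exists>u \<in> D. E v u"
    and "x \<in> D" "y \<in> D"
    and "E x a" "E x b" "E y a" "E y b" "a \<noteq> b" "\<not> E a b"
  shows "\<forall>v \<in> V - insert a (insert b (D - {x, y})). \<exists>u \<in> insert a (insert b (D - {x, y})). E v u"
proof
  have sym: "\<And>u v. E u v \<Longrightarrow> E v u" and inV: "\<And>u v. E u v \<Longrightarrow> u \<in> V \<and> v \<in> V"
    and irr: "\<And>v. \<not> E v v"
    using assms(1) unfolding graph_def by auto
  fix v assume v: "v \<in> V - insert a (insert b (D - {x, y}))"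
  show "\<exists>u \<in> insert a (insert b (D - {x, y})). E v u"
  proof (cases "v \<in> D")
    case True
    then show ?thesis using v assms(6,8) by auto
  next
    case False
    then obtain u where u: "u \<in> D" "E v u" using assms(3) v by auto
    show ?thesis
    proof (cases "u \<in> {x, y}")
      case True
      then have "E u a" "E u b" "E u v" using assms(6-9) u(2) sym by auto
      have "E v a \<or> E v b"
      proof (rule ccontr)
        assume "\<not> (E v a \<or> E v b)"
        then have "independent V E {a, b, v}"
          using assms(11) inV sym irr \<open>E u a\<close> \<open>E u b\<close> \<open>E u v\<close>
          unfolding independent_def by auto
        then have "v = a \<or> v = b"
          using claw_free_at_most_two_indep_nbrs[OF assms(1,2)] assms(10) \<open>E u a\<close> \<open>E u b\<close> \<open>E u v\<close>
          by (metis insertCI)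
        then show False using v by auto
      qed
      then show ?thesis by auto
    qed (use u in auto)
  qed
qed

lemma swap_indep_dominating:
  assumes "graph V E" "claw_free V E" "indep_dominating V E D"
    and "x \<in> D" "y \<in> D" "x \<noteq> y"
    and "E x a" "E x b" "E y a" "E y b" "a \<noteq> b" "\<not> E a b"
  shows "indep_dominating V E (insert a (insert b (D - {x, y})))"
  using swap_independent[OF assms(1,2) _ assms(4-10,12)] swap_dominating[OF assms(1,2) _ assms(4,5,7-12)]
    assms(3) unfolding indep_dominating_def by simp

lemma card_swap_le:
  assumes "finite D" "x \<in> D" "y \<in> D" "x \<noteq> y"
  shows "card (insert a (insert b (D - {x, y}))) \<le> card D"
proof -
  have "card (insert a (insert b (D - {x, y}))) \<le> card (D - {x, y}) + 2"
    using assms(1) by (simp add: card_insert_if)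
  also have "card (D - {x, y}) = card D - 2"
    using assms by (simp add: card_Diff_subset)
  also have "2 \<le> card D"
    using card_mono[OF assms(1), of "{x, y}"] assms(2-4) by simp
  then have "card D - 2 + 2 = card D" by simp
  finally show ?thesis .
qed

theorem lemma8:
  fixes V :: "'a set" and E :: "'a \<Rightarrow> 'a \<Rightarrow> bool" and I D X :: "'a set"
  assumes "graph V E"
    and "claw_free V E"
    and "max_independent V E I"
    and "min_indep_dominating V E D"
    and "is_pack V E I X"
    and "card (D \<inter> X) > 1"
  shows "\<exists>D'. min_indep_dominating V E D' \<and> D' \<inter> I \<noteq> {}"
proof -
  obtain x y where xy: "x \<in> D \<inter> X" "y \<in> D \<inter> X" "x \<noteq> y"
    using assms(6) card_le_Suc0_iff_eq[of "D \<inter> X"] by (cases "finite (D \<inter> X)") auto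
  have D: "indep_dominating V E D" "finite D"
    using assms(1,4) finite_subset
    unfolding min_indep_dominating_def indep_dominating_def independent_def graph_def by auto
  have "\<not> E x y"
    using D(1) xy unfolding indep_dominating_def independent_def by blast
  have "X \<noteq> pack1 V E I a" for a
    using pack1_clique[OF assms(1,3)] xy \<open>\<not> E x y\<close> by blast
  then obtain a b where ab: "a \<in> I" "b \<in> I" "a \<noteq> b" and X: "X = pack2 V E I a b"
    using assms(5) unfolding is_pack_def by blast
  have "\<not> E a b"
    using assms(3) ab unfolding max_independent_def independent_def by blast
  moreover have "E x a" "E x b" "E y a" "E y b"
    using xy unfolding X pack2_def nbhd_def by auto
  ultimately have "indep_dominating V E (insert a (insert b (D - {x, y})))"
    using swap_indep_dominating[OF assms(1,2) D(1)] xy ab(3) by simp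
  moreover have "card (insert a (insert b (D - {x, y}))) \<le> card D"
    using card_swap_le[OF D(2)] xy by simp
  ultimately have "min_indep_dominating V E (insert a (insert b (D - {x, y})))"
    using assms(4) unfolding min_indep_dominating_def by (meson le_trans)
  then show ?thesis using ab by blast
qed

end
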